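(* Let $(S,\mathcal{S})$ be a measurable space with $\Delta\in\mathcal{S}\otimes\mathcal{S}$ and let $\mathcal{H}\subseteq\mathcal{S}$ be a semiring with $\sigma(\mathcal{H})=\mathcal{S}$. Then $\mathcal{H}$ is self-dissecting.
   Context: $\Delta=\{(x,x)\mid x\in S\}$. For $A\subseteq S$ and, for each $n\in\mathbb{N}$, a family $\{A_{n,k}\mid k\in I_n\}$ of subsets of $S$ with $I_n\subseteq\mathbb{N}$, the sequence $(\{A_{n,k}\mid k\in I_n\})_{n}$ is a dissecting system for $A$ if: (i) for each $n$ the sets $A_{n,k}$, $k\in I_n$, are pairwise disjoint, $\bigcup_{k\in I_n}A_{n,k}\subseteq\bigcup_{k\in I_{n+1}}A_{n+1,k}\subseteq A$, and $\bigcup_{n,k}A_{n,k}=A$; (ii) for any distinct $x,y\in A$ there is $n(x,y)$ such that for all $n\ge n(x,y)$ some $A_{n,k}$ contains exactly one of $x,y$. A nonempty family $\mathcal{E}\subseteq\mathcal{P}(S)$ is self-dissecting if every $A\in\mathcal{E}$ has a dissecting system with $\{A_{n,k}\mid k\in I_n\}\subseteq\mathcal{E}$ for all $n$. *)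

theory Defs
  imports "HOL-Analysis.Analysis"
begin

definition dissecting_system ::
  "'a set \<Rightarrow> (nat \<Rightarrow> nat \<Rightarrow> 'a set) \<Rightarrow> (nat \<Rightarrow> nat set) \<Rightarrow> bool" where
  "dissecting_system B A I \<longleftrightarrow>
     (\<forall>n. disjoint_family_on (A n) (I n)) \<and>
     (\<forall>n. (\<Union>k\<in>I n. A n k) \<subseteq> (\<Union>k\<in>I (Suc n). A (Suc n) k)) \<and>
     (\<forall>n. (\<Union>k\<in>I n. A n k) \<subseteq> B) \<and>
     (\<Union>n. \<Union>k\<in>I n. A n k) = B \<and>
     (\<forall>x\<in>B. \<forall>y\<in>B. x \<noteq> y \<longrightarrow>
        (\<exists>N. \<forall>n\<ge>N. \<exists>k\<in>I n. (x \<in> A n k \<and> y \<notin> A n k) \<or> (y \<in> A n k \<and> x \<notin> A n k)))"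

definition self_dissecting :: "'a set set \<Rightarrow> bool" where
  "self_dissecting E \<longleftrightarrow> E \<noteq> {} \<and>
     (\<forall>B\<in>E. \<exists>A I. dissecting_system B A I \<and> (\<forall>n. A n ` I n \<subseteq> E))"

end

theory Submission
  imports Defs
begin

(*
  A set in the sigma-algebra generated by a family Gen already lies in the
  sigma-algebra generated by some countable subfamily of Gen, and points that no set of a
  family tells apart are not told apart by any set of the generated sigma-algebra.

  Applied to the diagonal, which lies in the product sigma-algebra generated by the
  measurable rectangles, this yields a countable measurable family separating the points
  of S; applied once more to the generator H, a countable separating family g 0, g 1, ...
  inside H.  Given B in H we then split B successively along g 0, g 1, ...: in a semiring
  every p - g n is a finite disjoint union of members of H, so the n-th stage is a finite
  partition P n of B by members of H, each piece lying inside or outside of every g i with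
  i < n.  Two distinct points of B are separated by some g i, hence lie in different pieces
  from stage i + 1 on.  Enumerating each finite partition gives the dissecting system.
*)

definition separating :: "'a set \<Rightarrow> 'a set set \<Rightarrow> bool" where
  "separating \<Omega> G \<longleftrightarrow> (\<forall>x\<in>\<Omega>. \<forall>y\<in>\<Omega>. x \<noteq> y \<longrightarrow> (\<exists>g\<in>G. x \<in> g \<longleftrightarrow> y \<notin> g))"

lemma separating_mono:
  assumes "separating \<Omega> G" and "G \<subseteq> G'"
  shows "separating \<Omega> G'"
  unfolding separating_def
proof (intro ballI impI)
  fix x y assume "x \<in> \<Omega>" "y \<in> \<Omega>" "x \<noteq> y"
  then obtain g where "g \<in> G" "x \<in> g \<longleftrightarrow> y \<notin> g"
    using assms(1) unfolding separating_def by blast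
  with assms(2) show "\<exists>g\<in>G'. x \<in> g \<longleftrightarrow> y \<notin> g" by blast
qed

lemma sigma_sets_countable_generators:
  assumes "E \<in> sigma_sets \<Omega> Gen"
  shows "\<exists>G. countable G \<and> G \<subseteq> Gen \<and> E \<in> sigma_sets \<Omega> G"
  using assms
proof (induction rule: sigma_sets.induct)
  case (Basic a)
  then show ?case by (intro exI[of _ "{a}"]) auto
next
  case Empty
  then show ?case by (intro exI[of _ "{}"]) (auto intro: sigma_sets.Empty)
next
  case (Compl a)
  then show ?case by (blast intro: sigma_sets.Compl)
next
  case (Union a)
  then obtain G where G: "\<And>i. countable (G i) \<and> G i \<subseteq> Gen \<and> a i \<in> sigma_sets \<Omega> (G i)"
    by metis
  have "a i \<in> sigma_sets \<Omega> (\<Union>i. G i)" for i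
    using G sigma_sets_mono'[of "G i" "\<Union>i. G i" \<Omega>] by blast
  then have "(\<Union>i. a i) \<in> sigma_sets \<Omega> (\<Union>i. G i)"
    by (rule sigma_sets.Union)
  with G show ?case by (intro exI[of _ "\<Union>i. G i"]) auto
qed

lemma sigma_sets_indistinguishable:
  assumes "E \<in> sigma_sets \<Omega> G" and "x \<in> \<Omega>" "y \<in> \<Omega>"
    and "\<forall>g\<in>G. x \<in> g \<longleftrightarrow> y \<in> g"
  shows "x \<in> E \<longleftrightarrow> y \<in> E"
  using assms(1) by induction (use assms(2-) in auto)

lemma separating_of_measurable_diagonal:
  fixes M :: "'a measure"
  assumes diag: "{(x, x) | x. x \<in> space M} \<in> sets (M \<Otimes>\<^sub>M M)"
  shows "\<exists>C. countable C \<and> C \<subseteq> sets M \<and> separating (space M) C"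
proof -
  let ?\<Delta> = "{(x, x) | x. x \<in> space M}"
  let ?rect = "\<lambda>(a, b). a \<times> b"
  have "{a \<times> b | a b. a \<in> sets M \<and> b \<in> sets M} = ?rect ` (sets M \<times> sets M)"
    by (auto simp: image_def)
  with diag have "?\<Delta> \<in> sigma_sets (space M \<times> space M) (?rect ` (sets M \<times> sets M))"
    by (simp only: sets_pair_measure)
  from sigma_sets_countable_generators[OF this]
  obtain G where "countable G \<and> G \<subseteq> ?rect ` (sets M \<times> sets M) \<and>
      ?\<Delta> \<in> sigma_sets (space M \<times> space M) G" ..
  then have G: "countable G" "G \<subseteq> ?rect ` (sets M \<times> sets M)"
    and \<Delta>G: "?\<Delta> \<in> sigma_sets (space M \<times> space M) G"
    by simp_all
  have "\<exists>R. countable R \<and> R \<subseteq> sets M \<times> sets M \<and> G = ?rect ` R"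
    using G by (intro countable_subset_image[THEN iffD1] conjI)
  then obtain R where "countable R \<and> R \<subseteq> sets M \<times> sets M \<and> G = ?rect ` R" ..
  then have R: "countable R" "R \<subseteq> sets M \<times> sets M" and GR: "G = ?rect ` R"
    by simp_all
  define C where "C = fst ` R \<union> snd ` R"
  have "separating (space M) C"
    unfolding separating_def
  proof (intro ballI impI)
    fix x y assume xy: "x \<in> space M" "y \<in> space M" "x \<noteq> y"
    show "\<exists>c\<in>C. x \<in> c \<longleftrightarrow> y \<notin> c"
    proof (rule ccontr)
      assume no_sep: "\<not> ?thesis"
      have agree: "(x, x) \<in> r \<longleftrightarrow> (x, y) \<in> r" if "r \<in> G" for r
      proof -
        from that obtain a b where ab: "(a, b) \<in> R" "r = a \<times> b"
          unfolding GR by auto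
        then have "b \<in> C"
          unfolding C_def by force
        with no_sep have "x \<in> b \<longleftrightarrow> y \<in> b"
          by auto
        with ab(2) show ?thesis by simp
      qed
      have "(x, x) \<in> ?\<Delta> \<longleftrightarrow> (x, y) \<in> ?\<Delta>"
        by (rule sigma_sets_indistinguishable[OF \<Delta>G]) (use xy agree in auto)
      with xy show False by auto
    qed
  qed
  moreover have "countable C" "C \<subseteq> sets M"
    using R unfolding C_def by auto
  ultimately show ?thesis by blast
qed

lemma separating_generators:
  assumes C: "countable C" "C \<subseteq> sigma_sets \<Omega> Gen" and sep: "separating \<Omega> C"
  shows "\<exists>G. countable G \<and> G \<subseteq> Gen \<and> separating \<Omega> G"
proof -
  have "\<forall>c\<in>C. \<exists>G. countable G \<and> G \<subseteq> Gen \<and> c \<in> sigma_sets \<Omega> G"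
    using C(2) sigma_sets_countable_generators by blast
  then obtain G where G: "\<And>c. c \<in> C \<Longrightarrow> countable (G c) \<and> G c \<subseteq> Gen \<and> c \<in> sigma_sets \<Omega> (G c)"
    by metis
  have "separating \<Omega> (\<Union>c\<in>C. G c)"
    unfolding separating_def
  proof (intro ballI impI)
    fix x y assume xy: "x \<in> \<Omega>" "y \<in> \<Omega>" "x \<noteq> y"
    then obtain c where c: "c \<in> C" "x \<in> c \<longleftrightarrow> y \<notin> c"
      using sep unfolding separating_def by blast
    then have "\<not> (\<forall>g\<in>G c. x \<in> g \<longleftrightarrow> y \<in> g)"
      using sigma_sets_indistinguishable[of c \<Omega> "G c" x y] G xy by blast
    with c(1) show "\<exists>g\<in>\<Union>c\<in>C. G c. x \<in> g \<longleftrightarrow> y \<notin> g" by blast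
  qed
  with C(1) G show ?thesis by (intro exI[of _ "\<Union>c\<in>C. G c"]) auto
qed

definition split_along :: "'a set set \<Rightarrow> 'a set \<Rightarrow> 'a set \<Rightarrow> 'a set set" where
  "split_along H h p =
     insert (p \<inter> h) (SOME D. D \<subseteq> H \<and> finite D \<and> disjoint D \<and> p - h = \<Union>D)"

lemma (in semiring_of_sets) split_along:
  assumes "p \<in> M" "h \<in> M"
  shows "split_along M h p \<subseteq> M" "finite (split_along M h p)"
    "disjoint (split_along M h p)" "\<Union>(split_along M h p) = p"
    "\<And>q. q \<in> split_along M h p \<Longrightarrow> q \<subseteq> h \<or> q \<inter> h = {}"
proof -
  define D where "D = (SOME D. D \<subseteq> M \<and> finite D \<and> disjoint D \<and> p - h = \<Union>D)"
  have "D \<subseteq> M \<and> finite D \<and> disjoint D \<and> p - h = \<Union>D"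
    unfolding D_def by (rule someI_ex) (use Diff_cover[OF assms] in blast)
  then have D: "D \<subseteq> M" "finite D" "disjoint D" and D_sub: "\<And>q. q \<in> D \<Longrightarrow> q \<subseteq> p - h"
    and D_cover: "\<Union>D = p - h"
    by auto
  have S: "split_along M h p = insert (p \<inter> h) D"
    unfolding split_along_def D_def ..
  show "split_along M h p \<subseteq> M"
    using D(1) Int[OF assms] by (simp add: S)
  show "finite (split_along M h p)"
    using D(2) by (simp add: S)
  show "\<Union>(split_along M h p) = p"
    using D_cover by (auto simp: S)
  have "disjnt (p \<inter> h) q" if "q \<in> D" for q
    using D_sub[OF that] by (auto simp: disjnt_def)
  then show "disjoint (split_along M h p)"
    unfolding S using D(3) by (simp add: pairwise_insert disjnt_sym)
  show "q \<subseteq> h \<or> q \<inter> h = {}" if "q \<in> split_along M h p" for q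
  proof (cases "q = p \<inter> h")
    case False
    then have "q \<in> D" using that by (simp add: S)
    then have "q \<subseteq> p - h" by (rule D_sub)
    then show ?thesis by auto
  qed simp
qed

primrec refinement :: "'a set set \<Rightarrow> (nat \<Rightarrow> 'a set) \<Rightarrow> 'a set \<Rightarrow> nat \<Rightarrow> 'a set set" where
  "refinement H g B 0 = {B}"
| "refinement H g B (Suc n) = (\<Union>p\<in>refinement H g B n. split_along H (g n) p)"

lemma (in semiring_of_sets) refinement_partition:
  fixes g :: "nat \<Rightarrow> 'a set"
  assumes g: "range g \<subseteq> M" and B: "B \<in> M"
  shows "finite (refinement M g B n) \<and> refinement M g B n \<subseteq> M \<and>
    disjoint (refinement M g B n) \<and> \<Union>(refinement M g B n) = B \<and>
    (\<forall>q\<in>refinement M g B n. \<forall>i<n. q \<subseteq> g i \<or> q \<inter> g i = {})"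
proof (induction n)
  case 0
  then show ?case using B by simp
next
  case (Suc n)
  let ?P = "refinement M g B n" and ?F = "split_along M (g n)"
  from Suc have P: "finite ?P" "?P \<subseteq> M" "disjoint ?P" "\<Union>?P = B"
    and P_sides: "\<And>p i. p \<in> ?P \<Longrightarrow> i < n \<Longrightarrow> p \<subseteq> g i \<or> p \<inter> g i = {}"
    by auto
  have pM: "p \<in> M" if "p \<in> ?P" for p
    using that P(2) by blast
  have "g n \<in> M"
    using g by blast
  note F = split_along[OF pM this]
  have fin: "finite (\<Union>p\<in>?P. ?F p)"
    using P(1) F(2) by (intro finite_UN_I)
  have sub: "(\<Union>p\<in>?P. ?F p) \<subseteq> M"
    using F(1) by (intro UN_least)
  have cover: "\<Union>(\<Union>p\<in>?P. ?F p) = B"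
  proof -
    have "\<Union>(\<Union>p\<in>?P. ?F p) = (\<Union>p\<in>?P. \<Union>(?F p))"
      by blast
    also have "\<dots> = \<Union>?P"
      using F(4) by simp
    finally show ?thesis
      using P(4) by simp
  qed
  have disj: "disjoint (\<Union>p\<in>?P. ?F p)"
  proof (rule disjoint_UN)
    show "disjoint_family_on (\<lambda>p. \<Union>(?F p)) ?P"
      unfolding disjoint_family_on_def
    proof (intro ballI impI)
      fix p q assume "p \<in> ?P" "q \<in> ?P" "p \<noteq> q"
      then show "\<Union>(?F p) \<inter> \<Union>(?F q) = {}"
        using F(4) P(3) by (simp add: disjointD)
    qed
  qed (rule F(3))
  have sides: "\<forall>q\<in>\<Union>p\<in>?P. ?F p. \<forall>i<Suc n. q \<subseteq> g i \<or> q \<inter> g i = {}"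
  proof (intro ballI allI impI)
    fix q i assume "q \<in> (\<Union>p\<in>?P. ?F p)" and i: "i < Suc n"
    then obtain p where p: "p \<in> ?P" "q \<in> ?F p" by blast
    show "q \<subseteq> g i \<or> q \<inter> g i = {}"
    proof (cases "i = n")
      case True
      then show ?thesis using F(5)[OF p] by simp
    next
      case False
      then have "p \<subseteq> g i \<or> p \<inter> g i = {}"
        using P_sides[OF p(1)] i by simp
      moreover have "q \<subseteq> p"
        using F(4)[OF p(1)] p(2) by blast
      ultimately show ?thesis by blast
    qed
  qed
  show ?case
    unfolding refinement.simps(2) using fin sub cover disj sides by blast
qed

lemma (in semiring_of_sets) refinement_separates:
  fixes g :: "nat \<Rightarrow> 'a set"
  assumes g: "range g \<subseteq> M" and B: "B \<in> M"
    and sep: "separating \<Omega> (range g)" and xy: "x \<in> B" "y \<in> B" "x \<noteq> y"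
  shows "\<exists>N. \<forall>n\<ge>N. \<exists>q\<in>refinement M g B n. x \<in> q \<and> y \<notin> q"
proof -
  have "x \<in> \<Omega>" "y \<in> \<Omega>"
    using B sets_into_space xy by auto
  then obtain i where i: "x \<in> g i \<longleftrightarrow> y \<notin> g i"
    using sep xy(3) unfolding separating_def by blast
  have "\<exists>q\<in>refinement M g B n. x \<in> q \<and> y \<notin> q" if "Suc i \<le> n" for n
  proof -
    have cover: "\<Union>(refinement M g B n) = B"
      and sides: "\<forall>q\<in>refinement M g B n. \<forall>i<n. q \<subseteq> g i \<or> q \<inter> g i = {}"
      using refinement_partition[OF g B, of n] by simp_all
    obtain q where q: "q \<in> refinement M g B n" "x \<in> q"
      using cover xy(1) by blast
    have "i < n" using that by simp
    with sides q(1) have "q \<subseteq> g i \<or> q \<inter> g i = {}"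
      by blast
    then have "y \<notin> q"
    proof
      assume "q \<subseteq> g i"
      with q(2) i show "y \<notin> q" by auto
    next
      assume "q \<inter> g i = {}"
      with q(2) i show "y \<notin> q" by auto
    qed
    with q show ?thesis by blast
  qed
  then show ?thesis by blast
qed

lemma dissecting_system_of_partitions:
  assumes fin: "\<And>n. finite (P n)" and disj: "\<And>n. disjoint (P n)"
    and cover: "\<And>n. \<Union>(P n) = B"
    and sep: "\<And>x y. x \<in> B \<Longrightarrow> y \<in> B \<Longrightarrow> x \<noteq> y \<Longrightarrow> \<exists>N. \<forall>n\<ge>N. \<exists>q\<in>P n. x \<in> q \<and> y \<notin> q"
  shows "\<exists>A I. dissecting_system B A I \<and> (\<forall>n. A n ` I n = P n)"
proof -
  define I where "I n = {0..<card (P n)}" for n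
  have "\<forall>n. \<exists>A. bij_betw A (I n) (P n)"
    unfolding I_def using ex_bij_betw_nat_finite[OF fin] by blast
  then obtain A where A: "\<forall>n. bij_betw (A n) (I n) (P n)"
    by (rule choice[THEN exE])
  then have img: "A n ` I n = P n" for n
    by (simp add: bij_betw_def)
  have cover_A: "(\<Union>k\<in>I n. A n k) = B" for n
    using img cover by simp
  have "dissecting_system B A I"
    unfolding dissecting_system_def
  proof (intro conjI allI ballI impI)
    fix n
    show "disjoint_family_on (A n) (I n)"
      unfolding disjoint_family_on_def
    proof (intro ballI impI)
      fix k l assume "k \<in> I n" "l \<in> I n" "k \<noteq> l"
      then have "A n k \<noteq> A n l"
        using A by (auto simp: bij_betw_def inj_on_def)
      moreover have "A n k \<in> P n" "A n l \<in> P n"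
        using \<open>k \<in> I n\<close> \<open>l \<in> I n\<close> img by blast+
      ultimately show "A n k \<inter> A n l = {}"
        using disjointD[OF disj] by blast
    qed
    show "(\<Union>k\<in>I n. A n k) \<subseteq> (\<Union>k\<in>I (Suc n). A (Suc n) k)" "(\<Union>k\<in>I n. A n k) \<subseteq> B"
      using cover_A by simp_all
  next
    show "(\<Union>n. \<Union>k\<in>I n. A n k) = B"
      using cover_A by simp
  next
    fix x y assume "x \<in> B" "y \<in> B" "x \<noteq> y"
    then obtain N where N: "\<forall>n\<ge>N. \<exists>q\<in>P n. x \<in> q \<and> y \<notin> q"
      using sep by blast
    have "\<exists>k\<in>I n. x \<in> A n k \<and> y \<notin> A n k" if "n \<ge> N" for n
    proof -
      from N that obtain q where "q \<in> P n" "x \<in> q" "y \<notin> q"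
        by blast
      moreover from \<open>q \<in> P n\<close> obtain k where "k \<in> I n" "q = A n k"
        unfolding img[symmetric] by blast
      ultimately show ?thesis by blast
    qed
    then show "\<exists>N. \<forall>n\<ge>N. \<exists>k\<in>I n. x \<in> A n k \<and> y \<notin> A n k \<or> y \<in> A n k \<and> x \<notin> A n k"
      by blast
  qed
  with img show ?thesis by blast
qed

lemma (in semiring_of_sets) dissecting_system_in_semiring:
  fixes g :: "nat \<Rightarrow> 'a set"
  assumes g: "range g \<subseteq> M" and sep: "separating \<Omega> (range g)" and B: "B \<in> M"
  shows "\<exists>A I. dissecting_system B A I \<and> (\<forall>n. A n ` I n \<subseteq> M)"
proof -
  have part: "finite (refinement M g B n)" "disjoint (refinement M g B n)"
    "\<Union>(refinement M g B n) = B" "refinement M g B n \<subseteq> M" for n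
    using refinement_partition[OF g B, of n] by simp_all
  have "\<exists>A I. dissecting_system B A I \<and> (\<forall>n. A n ` I n = refinement M g B n)"
    by (rule dissecting_system_of_partitions[OF part(1-3) refinement_separates[OF g B sep]])
  with part(4) show ?thesis
    by metis
qed

theorem proposition2p8:
  fixes M :: "'a measure" and H :: "'a set set"
  assumes "{(x, x) | x. x \<in> space M} \<in> sets (M \<Otimes>\<^sub>M M)"
    and "semiring_of_sets (space M) H"
    and "H \<subseteq> sets M"
    and "sigma_sets (space M) H = sets M"
  shows "self_dissecting H"
proof -
  interpret S: semiring_of_sets "space M" H by fact
  obtain C where C: "countable C" "C \<subseteq> sets M" "separating (space M) C"
    using separating_of_measurable_diagonal[OF assms(1)] by blast
  have "C \<subseteq> sigma_sets (space M) H"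
    using C(2) assms(4) by simp
  from separating_generators[OF C(1) this C(3)]
  obtain G where G: "countable G" "G \<subseteq> H" "separating (space M) G"
    by blast
  define g where "g = from_nat_into (insert {} G)"
  have range_g: "range g = insert {} G"
    unfolding g_def using G(1) by simp
  have g: "range g \<subseteq> H"
    using range_g G(2) S.empty_sets by simp
  have sep_g: "separating (space M) (range g)"
    using separating_mono[OF G(3)] range_g by blast
  have "\<exists>A I. dissecting_system B A I \<and> (\<forall>n. A n ` I n \<subseteq> H)" if "B \<in> H" for B
    using S.dissecting_system_in_semiring[OF g sep_g that] .
  then show ?thesis
    unfolding self_dissecting_def using S.empty_sets by blast
qed

end
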